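(* Assume the standing assumptions (A), a quadrature rule and grid as below, and let $\rho_0:\mathbb{R}\to[0,\rho_{\max}]$ be such that the initial cell averages are $\bar\rho_j(0)=\sum_{\nu=1}^R\gamma_\nu\rho_0(x_{j-1/2}+hy_\nu)$; set $\rho_m=\inf_{\mathbb{R}}\rho_0$, $\rho_M=\sup_{\mathbb{R}}\rho_0$. Suppose the reconstruction used at every stage has the property (R) below, and let the semi-discrete operator $L$ be defined by $L(\bar\rho)_j=-\frac1h\big(V_{j+1/2}g(\rho^-_{j+1/2})-V_{j-1/2}g(\rho^-_{j-1/2})\big)$ with $V_{j+1/2}$, $\rho^-_{j+1/2}$ computed from that reconstruction. Let the time integration be an SSP method (in the sense below) with SSP constant $c_{SSP}>0$ and time step $\tau$ satisfying $$\tau\le c_{SSP}\,\frac{\gamma_R h}{\gamma_R h\,w_\eta(0)\|v'\|\|g\|+\|v\|\|g'\|}.$$ Then the fully discrete approximate cell averages satisfy $\rho_m\le\bar\rho_j(t^n)\le\rho_M$ for all $j\in\mathbb{Z}$ and all $t^n=n\tau$, $n\in\mathbb{N}$.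
   Context: Standing assumptions (A): $\rho_{\max}>0$, $\eta>0$; $g\in C^1([0,\rho_{\max}];\mathbb{R}_{\ge0})$ with $g'\ge0$; $v\in C^1([0,\rho_{\max}];\mathbb{R}_{\ge0})$ with $v'\le0$; $w_\eta\in C^1([0,\eta];\mathbb{R}_{\ge0})$ with $w_\eta'\le0$ and $\int_0^\eta w_\eta=1$. Norms $\|\cdot\|$ are sup norms on $[0,\rho_{\max}]$. Grid: $h>0$, $x_j=x_0+jh$, $I_j=[x_{j-1/2},x_{j+1/2}]$, $N\in\mathbb{N}$ with $Nh=\eta$. Quadrature: nodes $y_1,\dots,y_R\in[0,1]$ with $y_R=1$, weights $\gamma_\nu>0$, $\sum\gamma_\nu=1$; $w_\eta^{\nu,k}=w_\eta((k+y_\nu)h)$ with $h\sum_{k=0}^{N-1}\sum_\nu\gamma_\nu w_\eta^{\nu,k}=1$. Property (R): whenever all cell averages $\bar\rho_l$ lie in $[\rho_m,\rho_M]$, the reconstruction provides for each $l$ a polynomial $P_l$ on $I_l$ with $\frac1h\int_{I_l}P_l=\bar\rho_l$, for which the quadrature rule is exact, and whose values $\rho_l^\nu=P_l(x_{l-1/2}+y_\nu h)$ lie in $[\rho_m,\rho_M]$ (in the paper this is achieved by applying the Zhang–Shu linear scaling limiter $\tilde P_l=\bar\rho_l+\theta(P_l-\bar\rho_l)$ to CWENO reconstructions). Then $\rho^-_{j+1/2}=P_j(x_{j+1/2})=\rho_j^R$ and $V_{j+1/2}=v\big(h\sum_{k=0}^{N-1}\sum_\nu\gamma_\nu w_\eta^{\nu,k}\rho^\nu_{j+k+1}\big)$.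 SSP method with constant $c_{SSP}$: an explicit (multistage and/or multistep) method in which every new stage or step value is a convex combination of terms of the form $u+\tau\beta L(u)$, where $u$ is a previously computed stage/step value and $0\le\beta\le 1/c_{SSP}$ (equivalently, it is a convex combination of forward Euler steps with step sizes at most $\tau/c_{SSP}$). *)

theory Defs
  imports "HOL-Analysis.Analysis" "HOL-Computational_Algebra.Polynomial"
begin

definition supnorm :: "real \<Rightarrow> (real \<Rightarrow> real) \<Rightarrow> real" where
  "supnorm a f = (SUP x\<in>{0..a}. \<bar>f x\<bar>)"

text \<open>Cell interface x_{j-1/2} = x0 + (j - 1/2) h.\<close>
definition xl :: "real \<Rightarrow> real \<Rightarrow> int \<Rightarrow> real" where
  "xl x0 h j = x0 + (real_of_int j - 1/2) * h"

text \<open>Reconstruction: rec rb l is the polynomial P_l built from the cell averages rb.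
  Node values rho_l^nu = P_l(x_{l-1/2} + y_nu h).\<close>
definition nodeval :: "((int \<Rightarrow> real) \<Rightarrow> int \<Rightarrow> real poly) \<Rightarrow> real \<Rightarrow> real \<Rightarrow> (nat \<Rightarrow> real)
    \<Rightarrow> (int \<Rightarrow> real) \<Rightarrow> int \<Rightarrow> nat \<Rightarrow> real" where
  "nodeval rec x0 h y rb l \<nu> = poly (rec rb l) (xl x0 h l + y \<nu> * h)"

definition rhominus :: "((int \<Rightarrow> real) \<Rightarrow> int \<Rightarrow> real poly) \<Rightarrow> real \<Rightarrow> real
    \<Rightarrow> (int \<Rightarrow> real) \<Rightarrow> int \<Rightarrow> real" where
  "rhominus rec x0 h rb j = poly (rec rb j) (xl x0 h (j + 1))"

definition Vface :: "(real \<Rightarrow> real) \<Rightarrow> (real \<Rightarrow> real) \<Rightarrow> nat \<Rightarrow> nat \<Rightarrow> (nat \<Rightarrow> real)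
    \<Rightarrow> (nat \<Rightarrow> real) \<Rightarrow> ((int \<Rightarrow> real) \<Rightarrow> int \<Rightarrow> real poly) \<Rightarrow> real \<Rightarrow> real
    \<Rightarrow> (int \<Rightarrow> real) \<Rightarrow> int \<Rightarrow> real" where
  "Vface v w N R y \<gamma> rec x0 h rb j =
     v (h * (\<Sum>k<N. \<Sum>\<nu>=1..R. \<gamma> \<nu> * w ((real k + y \<nu>) * h)
                   * nodeval rec x0 h y rb (j + int k + 1) \<nu>))"

definition Lop :: "(real \<Rightarrow> real) \<Rightarrow> (real \<Rightarrow> real) \<Rightarrow> (real \<Rightarrow> real) \<Rightarrow> nat \<Rightarrow> nat
    \<Rightarrow> (nat \<Rightarrow> real) \<Rightarrow> (nat \<Rightarrow> real) \<Rightarrow> ((int \<Rightarrow> real) \<Rightarrow> int \<Rightarrow> real poly) \<Rightarrow> real \<Rightarrow> real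
    \<Rightarrow> (int \<Rightarrow> real) \<Rightarrow> int \<Rightarrow> real" where
  "Lop g v w N R y \<gamma> rec x0 h rb j =
     - (1 / h) * (Vface v w N R y \<gamma> rec x0 h rb j * g (rhominus rec x0 h rb j)
                 - Vface v w N R y \<gamma> rec x0 h rb (j - 1) * g (rhominus rec x0 h rb (j - 1)))"

definition propR :: "((int \<Rightarrow> real) \<Rightarrow> int \<Rightarrow> real poly) \<Rightarrow> real \<Rightarrow> real \<Rightarrow> nat
    \<Rightarrow> (nat \<Rightarrow> real) \<Rightarrow> (nat \<Rightarrow> real) \<Rightarrow> real \<Rightarrow> real \<Rightarrow> bool" where
  "propR rec x0 h R y \<gamma> rm rM \<longleftrightarrow>
     (\<forall>rb. (\<forall>l. rm \<le> rb l \<and> rb l \<le> rM) \<longrightarrow>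
        (\<forall>l. integral {xl x0 h l .. xl x0 h (l + 1)} (poly (rec rb l)) / h = rb l
           \<and> integral {xl x0 h l .. xl x0 h (l + 1)} (poly (rec rb l)) / h
               = (\<Sum>\<nu>=1..R. \<gamma> \<nu> * poly (rec rb l) (xl x0 h l + y \<nu> * h))
           \<and> (\<forall>\<nu>\<in>{1..R}. rm \<le> nodeval rec x0 h y rb l \<nu> \<and> nodeval rec x0 h y rb l \<nu> \<le> rM)))"

text \<open>z enumerates all values computed by an explicit SSP method (stages and steps, in order
  of computation), z 0 being the initial data: every new value is a convex combination of
  forward-Euler terms u + tau beta L(u) with u previously computed and 0 <= beta <= 1/c.\<close>
definition ssp_run :: "((int \<Rightarrow> real) \<Rightarrow> int \<Rightarrow> real) \<Rightarrow> real \<Rightarrow> real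
    \<Rightarrow> (nat \<Rightarrow> int \<Rightarrow> real) \<Rightarrow> bool" where
  "ssp_run L c \<tau> z \<longleftrightarrow>
     (\<forall>m>0. \<exists>K (\<alpha>::nat \<Rightarrow> real) (\<beta>::nat \<Rightarrow> real) (p::nat \<Rightarrow> nat).
        (\<forall>k<K. 0 \<le> \<alpha> k \<and> 0 \<le> \<beta> k \<and> \<beta> k \<le> 1 / c \<and> p k < m)
        \<and> (\<Sum>k<K. \<alpha> k) = 1
        \<and> z m = (\<lambda>j. \<Sum>k<K. \<alpha> k * (z (p k) j + \<tau> * \<beta> k * L (z (p k)) j)))"

end

theory Submission
  imports Defs
begin

text \<open>
  Every SSP stage is a convex combination of forward Euler steps \<open>u + \<lambda> L(u)\<close> with
  \<open>\<lambda> \<le> \<tau>/c\<close>, so it suffices that one such step keeps cell averages in \<open>[\<rho>m, \<rho>M]\<close>.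
  With \<open>a = \<rho>\<^sup>-(j-1/2)\<close>, \<open>b = \<rho>\<^sup>-(j+1/2)\<close> and \<open>V\<^sup>\<plusminus> = V(j\<plusminus>1/2)\<close> the step reads
  \<open>u\<^sub>j + \<lambda>/h (V\<^sup>+ (g a - g b) + g a (V\<^sup>- - V\<^sup>+))\<close>.
  Because \<open>y\<^sub>R = 1\<close>, \<open>b\<close> is a quadrature node of cell \<open>j\<close>, whence \<open>\<gamma>\<^sub>R (\<rho>M - b) \<le> \<rho>M - u\<^sub>j\<close>;
  because \<open>w\<close> is nonincreasing, Abel summation shows that the argument of \<open>v\<close> grows by at most
  \<open>h w(0) (\<rho>M - u\<^sub>j)\<close> from face \<open>j-1/2\<close> to face \<open>j+1/2\<close>. By the mean value theorem the
  increment is then at most \<open>\<lambda>/h (\<parallel>v\<parallel>\<parallel>g'\<parallel>/\<gamma>\<^sub>R + h w(0)\<parallel>v'\<parallel>\<parallel>g\<parallel>) (\<rho>M - u\<^sub>j)\<close>, which the CFL condition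
  bounds by \<open>\<rho>M - u\<^sub>j\<close>. The lower bound is symmetric.
\<close>

definition mono_lipschitz_on :: "real set \<Rightarrow> real \<Rightarrow> (real \<Rightarrow> real) \<Rightarrow> bool" where
  "mono_lipschitz_on S L f \<longleftrightarrow>
     (\<forall>x\<in>S. \<forall>y\<in>S. x \<le> y \<longrightarrow> 0 \<le> f y - f x \<and> f y - f x \<le> L * (y - x))"

lemma mono_lipschitz_onD:
  assumes "mono_lipschitz_on S L f" "0 \<le> L" "x \<in> S" "y \<in> S" "y - x \<le> \<delta>" "0 \<le> \<delta>"
  shows "f y - f x \<le> L * \<delta>"
proof (cases "x \<le> y")
  case True
  then have "f y - f x \<le> L * (y - x)" using assms(1,3,4) unfolding mono_lipschitz_on_def by blast
  also have "\<dots> \<le> L * \<delta>" using assms(2,5) by (rule mult_left_mono[rotated])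
  finally show ?thesis .
next
  case False
  then have "f y - f x \<le> 0" using assms(1,3,4) unfolding mono_lipschitz_on_def by force
  also have "0 \<le> L * \<delta>" using assms(2,6) by simp
  finally show ?thesis .
qed

lemma increment_le_of_deriv_le:
  fixes f f' :: "real \<Rightarrow> real"
  assumes deriv: "\<forall>t\<in>{a..b}. (f has_real_derivative f' t) (at t within {a..b})"
    and bound: "\<forall>t\<in>{a..b}. f' t \<le> L"
    and "x \<in> {a..b}" "y \<in> {a..b}" "x \<le> y"
  shows "f y - f x \<le> L * (y - x)"
proof -
  have "(f has_derivative (*) (f' t)) (at t within {x..y})" if "x \<le> t" "t \<le> y" for t
  proof (rule has_derivative_subset)
    show "(f has_derivative (*) (f' t)) (at t within {a..b})"
      using deriv that assms(3,4) by (auto simp: has_field_derivative_def)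
  qed (use assms(3,4) in auto)
  from mvt_very_simple[OF \<open>x \<le> y\<close> this]
  obtain \<xi> where "\<xi> \<in> {x..y}" "f y - f x = f' \<xi> * (y - x)" by blast
  then show ?thesis
    using bound assms(3-5) by (auto intro!: mult_right_mono)
qed

lemma mono_lipschitz_on_of_deriv:
  fixes f f' :: "real \<Rightarrow> real"
  assumes deriv: "\<forall>t\<in>{a..b}. (f has_real_derivative f' t) (at t within {a..b})"
    and "\<forall>t\<in>{a..b}. 0 \<le> f' t \<and> f' t \<le> L"
  shows "mono_lipschitz_on {a..b} L f"
  unfolding mono_lipschitz_on_def
proof (intro ballI impI conjI)
  fix x y assume xy: "x \<in> {a..b}" "y \<in> {a..b}" "x \<le> y"
  show "f y - f x \<le> L * (y - x)"
    using increment_le_of_deriv_le[OF deriv _ xy] assms(2) by blast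
  have "(\<lambda>t. - f t) y - (\<lambda>t. - f t) x \<le> 0 * (y - x)"
    using deriv assms(2) by (intro increment_le_of_deriv_le[OF _ _ xy]) (auto intro: DERIV_minus)
  then show "0 \<le> f y - f x" by simp
qed

lemma antimono_on_of_deriv_nonpos:
  fixes f f' :: "real \<Rightarrow> real"
  assumes "\<forall>t\<in>{a..b}. (f has_real_derivative f' t) (at t within {a..b})" "\<forall>t\<in>{a..b}. f' t \<le> 0"
  shows "antimono_on {a..b} f"
proof (rule monotone_onI)
  fix x y assume "x \<in> {a..b}" "y \<in> {a..b}" "x \<le> y"
  from increment_le_of_deriv_le[OF assms this] show "f y \<le> f x" by simp
qed

lemma abs_le_supnorm:
  assumes "continuous_on {0..M} f" "x \<in> {0..M}"
  shows "\<bar>f x\<bar> \<le> supnorm M f"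
proof -
  have "bounded ((\<lambda>x. \<bar>f x\<bar>) ` {0..M})"
    by (intro compact_imp_bounded compact_continuous_image continuous_on_rabs assms) simp
  then have "bdd_above ((\<lambda>x. \<bar>f x\<bar>) ` {0..M})" by (rule bounded_imp_bdd_above)
  then show ?thesis unfolding supnorm_def using assms(2) by (rule cSUP_upper2) simp
qed

lemma supnorm_nonneg:
  assumes "0 \<le> M" "continuous_on {0..M} f"
  shows "0 \<le> supnorm M f"
  using abs_le_supnorm[OF assms(2), of 0] assms(1) by simp

lemma mono_lipschitz_on_supnorm:
  fixes f f' :: "real \<Rightarrow> real"
  assumes "\<forall>t\<in>{0..M}. (f has_real_derivative f' t) (at t within {0..M})"
    and "continuous_on {0..M} f'" "\<forall>t\<in>{0..M}. 0 \<le> f' t"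
  shows "mono_lipschitz_on {0..M} (supnorm M f') f"
proof (rule mono_lipschitz_on_of_deriv[OF assms(1)], intro ballI conjI)
  fix t assume t: "t \<in> {0..M}"
  show "0 \<le> f' t" using assms(3) t by blast
  then show "f' t \<le> supnorm M f'" using abs_le_supnorm[OF assms(2) t] by simp
qed

lemma neg_mono_lipschitz_on_supnorm:
  fixes f f' :: "real \<Rightarrow> real"
  assumes "\<forall>t\<in>{0..M}. (f has_real_derivative f' t) (at t within {0..M})"
    and "continuous_on {0..M} f'" "\<forall>t\<in>{0..M}. f' t \<le> 0"
  shows "mono_lipschitz_on {0..M} (supnorm M f') (\<lambda>x. - f x)"
proof -
  have "mono_lipschitz_on {0..M} (supnorm M (\<lambda>x. - f' x)) (\<lambda>x. - f x)"
    using assms by (intro mono_lipschitz_on_supnorm) (auto intro: DERIV_minus continuous_on_minus)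
  then show ?thesis by (simp add: supnorm_def)
qed

lemma bounds_supnorm_of_deriv:
  fixes f f' :: "real \<Rightarrow> real"
  assumes "\<forall>t\<in>{0..M}. (f has_real_derivative f' t) (at t within {0..M})"
    and "\<forall>x\<in>{0..M}. 0 \<le> f x"
  shows "\<forall>x\<in>{0..M}. 0 \<le> f x \<and> f x \<le> supnorm M f"
proof -
  have "continuous_on {0..M} f"
    using assms(1) by (meson DERIV_continuous continuous_on_eq_continuous_within)
  then show ?thesis using abs_le_supnorm assms(2) by fastforce
qed

lemma Inf_Sup_range_bounds:
  fixes f :: "'a \<Rightarrow> real"
  assumes "\<forall>x. lo \<le> f x \<and> f x \<le> hi"
  shows "(INF x. f x) \<le> f x" "f x \<le> (SUP x. f x)" "lo \<le> (INF x. f x)" "(SUP x. f x) \<le> hi"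
proof -
  have "bdd_below (range f)" "bdd_above (range f)"
    using assms by (auto intro!: bdd_belowI bdd_aboveI)
  then show "(INF x. f x) \<le> f x" "f x \<le> (SUP x. f x)" by (auto intro: cINF_lower cSUP_upper)
  show "lo \<le> (INF x. f x)" "(SUP x. f x) \<le> hi" using assms by (auto intro: cINF_greatest cSUP_least)
qed

lemma convex_combination_bounds:
  fixes a f :: "'a \<Rightarrow> real"
  assumes "finite S" "(\<Sum>i\<in>S. a i) = 1" "\<And>i. i \<in> S \<Longrightarrow> 0 \<le> a i"
    and "\<And>i. i \<in> S \<Longrightarrow> lo \<le> f i \<and> f i \<le> hi"
  shows "lo \<le> (\<Sum>i\<in>S. a i * f i) \<and> (\<Sum>i\<in>S. a i * f i) \<le> hi"
  using convex_sum[of S "{lo..hi}" a f] assms by simp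

lemma nonneg_mult_le_bound:
  fixes x X d B :: real
  assumes "0 \<le> x" "x \<le> X" "d \<le> B" "0 \<le> B"
  shows "x * d \<le> X * B"
proof (cases "0 \<le> d")
  case True
  then show ?thesis using assms by (intro mult_mono) auto
next
  case False
  then have "x * d \<le> 0" using assms(1) by (simp add: mult_nonneg_nonpos)
  also have "0 \<le> X * B" using assms by simp
  finally show ?thesis .
qed

lemma cfl_increment_le:
  fixes lam h \<gamma>R w0 G Gd Vn Vd T D P Q :: real
  assumes "0 \<le> lam" "0 < h" "0 < \<gamma>R" "0 \<le> T" "\<gamma>R * T \<le> D"
    and "0 \<le> Vn * Gd"
    and CFL: "lam * (\<gamma>R * h * w0 * Vd * G + Vn * Gd) \<le> \<gamma>R * h"
    and "P \<le> Vn * (Gd * T)" "Q \<le> G * (Vd * (h * w0 * D))"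
  shows "lam / h * (P + Q) \<le> D"
proof -
  have "0 \<le> \<gamma>R * T" using assms(3,4) by simp
  with assms(5) have "0 \<le> D" by linarith
  have "\<gamma>R * (lam * (P + Q)) \<le> \<gamma>R * (lam * (Vn * (Gd * T) + G * (Vd * (h * w0 * D))))"
    using assms(1,3,8,9) by (intro mult_left_mono add_mono) auto
  also have "\<dots> = lam * (Vn * Gd * (\<gamma>R * T) + \<gamma>R * G * Vd * h * w0 * D)"
    by (simp add: algebra_simps)
  also have "\<dots> \<le> lam * (Vn * Gd * D + \<gamma>R * G * Vd * h * w0 * D)"
    using assms(1,5,6) by (intro mult_left_mono add_right_mono) auto
  also have "\<dots> = D * (lam * (\<gamma>R * h * w0 * Vd * G + Vn * Gd))" by (simp add: algebra_simps)
  also have "\<dots> \<le> D * (\<gamma>R * h)" using \<open>0 \<le> D\<close> CFL by (intro mult_left_mono)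
  also have "\<dots> = \<gamma>R * (h * D)" by simp
  finally have "lam * (P + Q) \<le> h * D" using assms(3) by simp
  then show ?thesis using assms(2) by (simp add: field_simps)
qed

lemma cfl_rescaled:
  fixes \<tau> \<beta> c S B :: real
  assumes "\<tau> * S \<le> c * B" "0 < c" "0 \<le> \<tau>" "0 \<le> B" "0 \<le> \<beta>" "\<beta> \<le> 1 / c"
  shows "\<tau> * \<beta> * S \<le> B"
proof (cases "0 \<le> S")
  case True
  have "\<tau> * \<beta> * S \<le> \<tau> * (1 / c) * S"
    using True assms(3,6) by (intro mult_right_mono mult_left_mono)
  also have "\<dots> \<le> B" using assms(1,2) by (simp add: field_simps)
  finally show ?thesis .
next
  case False
  then have "\<tau> * \<beta> * S \<le> 0" using assms(3,5) by (simp add: mult_nonneg_nonpos)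
  then show ?thesis using assms(4) by linarith
qed

lemma flux_difference_step_bounds:
  fixes g v :: "real \<Rightarrow> real"
  assumes g: "mono_lipschitz_on {0..rmax} Gd g" "\<forall>x\<in>{0..rmax}. 0 \<le> g x \<and> g x \<le> G"
    and v: "mono_lipschitz_on {0..rmax} Vd (\<lambda>x. - v x)" "\<forall>x\<in>{0..rmax}. 0 \<le> v x \<and> v x \<le> Vn"
    and params: "0 \<le> Gd" "0 \<le> Vd" "0 < \<gamma>R" "0 \<le> w0" "0 < h" "0 \<le> lam"
    and CFL: "lam * (\<gamma>R * h * w0 * Vd * G + Vn * Gd) \<le> \<gamma>R * h"
    and bounds: "0 \<le> rm" "rM \<le> rmax" "a \<in> {rm..rM}" "b \<in> {rm..rM}" "Am \<in> {rm..rM}" "Ap \<in> {rm..rM}"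
    and last_node: "\<gamma>R * (rM - b) \<le> rM - u" "\<gamma>R * (b - rm) \<le> u - rm"
    and nonlocal: "Ap - Am \<le> h * w0 * (rM - u)" "Am - Ap \<le> h * w0 * (u - rm)"
  shows "rm \<le> u - lam / h * (v Ap * g b - v Am * g a)
       \<and> u - lam / h * (v Ap * g b - v Am * g a) \<le> rM"
proof
  have range: "x \<in> {0..rmax}" if "x \<in> {rm..rM}" for x using that bounds(1,2) by auto
  have ranges: "0 \<le> g a" "g a \<le> G" "0 \<le> v Ap" "v Ap \<le> Vn"
    using g(2) v(2) range bounds(3,6) by auto
  have "0 \<le> Vn * Gd" using ranges(3,4) params(1) by simp
  have last_gaps: "0 \<le> rM - b" "0 \<le> b - rm" using bounds(4) by auto
  then have "0 \<le> \<gamma>R * (rM - b)" "0 \<le> \<gamma>R * (b - rm)" using params(3) by simp_all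
  then have gaps: "0 \<le> rM - u" "0 \<le> u - rm" using last_node by linarith+
  show "rm \<le> u - lam / h * (v Ap * g b - v Am * g a)"
  proof -
    have "g b - g a \<le> Gd * (b - rm)"
      using bounds by (intro mono_lipschitz_onD[OF g(1) params(1)] range) auto
    then have P: "v Ap * (g b - g a) \<le> Vn * (Gd * (b - rm))"
      using ranges params last_gaps by (intro nonneg_mult_le_bound) auto
    have "v Ap - v Am \<le> Vd * (h * w0 * (u - rm))"
      using mono_lipschitz_onD[OF v(1) params(2) range range, of Ap Am] bounds nonlocal(2) gaps params
      by auto
    then have Q: "g a * (v Ap - v Am) \<le> G * (Vd * (h * w0 * (u - rm)))"
      using ranges params gaps by (intro nonneg_mult_le_bound) auto
    have "lam / h * (v Ap * (g b - g a) + g a * (v Ap - v Am)) \<le> u - rm"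
      by (rule cfl_increment_le[OF params(6,5,3) last_gaps(2) last_node(2) \<open>0 \<le> Vn * Gd\<close> CFL P Q])
    then show ?thesis by (simp add: algebra_simps)
  qed
  show "u - lam / h * (v Ap * g b - v Am * g a) \<le> rM"
  proof -
    have "g a - g b \<le> Gd * (rM - b)"
      using bounds by (intro mono_lipschitz_onD[OF g(1) params(1)] range) auto
    then have P: "v Ap * (g a - g b) \<le> Vn * (Gd * (rM - b))"
      using ranges params last_gaps by (intro nonneg_mult_le_bound) auto
    have "v Am - v Ap \<le> Vd * (h * w0 * (rM - u))"
      using mono_lipschitz_onD[OF v(1) params(2) range range, of Am Ap] bounds nonlocal(1) gaps params
      by auto
    then have Q: "g a * (v Am - v Ap) \<le> G * (Vd * (h * w0 * (rM - u)))"
      using ranges params gaps by (intro nonneg_mult_le_bound) auto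
    have "lam / h * (v Ap * (g a - g b) + g a * (v Am - v Ap)) \<le> rM - u"
      by (rule cfl_increment_le[OF params(6,5,3) last_gaps(1) last_node(1) \<open>0 \<le> Vn * Gd\<close> CFL P Q])
    then show ?thesis by (simp add: algebra_simps)
  qed
qed

lemma abel_sum_le:
  fixes W r :: "nat \<Rightarrow> real"
  assumes "0 < n" "\<forall>k<n. 0 \<le> W k" "\<forall>k. Suc k < n \<longrightarrow> W (Suc k) \<le> W k"
    and "\<forall>k\<in>{1..n}. r k \<le> B"
  shows "(\<Sum>k<n. W k * (r (Suc k) - r k)) \<le> W 0 * (B - r 0)"
proof -
  have "(\<Sum>k<n. W k * (r (Suc k) - r k)) \<le> W 0 * (B - r 0) - W (n - 1) * (B - r n)"
    using assms
  proof (induction n rule: nat_induct_non_zero)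
    case 1
    then show ?case by (simp add: algebra_simps)
  next
    case (Suc n)
    have "W n \<le> W (n - 1)" using Suc.prems(2)[rule_format, of "n - 1"] Suc.hyps by simp
    moreover have "r n \<le> B" using Suc.prems(3) Suc.hyps by auto
    ultimately have "0 \<le> (W (n - 1) - W n) * (B - r n)" by simp
    moreover have "(\<Sum>k<n. W k * (r (Suc k) - r k)) \<le> W 0 * (B - r 0) - W (n - 1) * (B - r n)"
      using Suc by simp
    ultimately show ?case by (simp add: algebra_simps)
  qed
  also have "\<dots> \<le> W 0 * (B - r 0)" using assms by auto
  finally show ?thesis .
qed

lemma quadrature_of_gap:
  fixes \<gamma> f :: "nat \<Rightarrow> real"
  assumes "(\<Sum>\<nu>=1..R. \<gamma> \<nu>) = 1"
  shows "(\<Sum>\<nu>=1..R. \<gamma> \<nu> * (c - f \<nu>)) = c - (\<Sum>\<nu>=1..R. \<gamma> \<nu> * f \<nu>)"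
  using assms by (simp add: right_diff_distrib sum_subtractf flip: sum_distrib_right)

lemma quadrature_gap_le:
  fixes \<gamma> f :: "nat \<Rightarrow> real"
  assumes "1 \<le> R" "(\<Sum>\<nu>=1..R. \<gamma> \<nu>) = 1" "\<forall>\<nu>\<in>{1..R}. 0 \<le> \<gamma> \<nu>" "\<forall>\<nu>\<in>{1..R}. f \<nu> \<le> hi"
  shows "\<gamma> R * (hi - f R) \<le> hi - (\<Sum>\<nu>=1..R. \<gamma> \<nu> * f \<nu>)"
proof -
  have "\<gamma> R * (hi - f R) \<le> (\<Sum>\<nu>=1..R. \<gamma> \<nu> * (hi - f \<nu>))"
    using assms by (intro member_le_sum) auto
  also have "\<dots> = hi - (\<Sum>\<nu>=1..R. \<gamma> \<nu> * f \<nu>)"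
    using assms(2) by (rule quadrature_of_gap)
  finally show ?thesis .
qed

definition kernel_weights :: "(real \<Rightarrow> real) \<Rightarrow> (nat \<Rightarrow> real) \<Rightarrow> real \<Rightarrow> nat \<Rightarrow> nat \<Rightarrow> real" where
  "kernel_weights w y h \<nu> k = w ((real k + y \<nu>) * h)"

text \<open>With \<open>W = kernel_weights w y h\<close> this is the argument of \<open>v\<close> in \<open>Vface\<close>.\<close>

definition nonlocal_density :: "real \<Rightarrow> (nat \<Rightarrow> real) \<Rightarrow> (nat \<Rightarrow> nat \<Rightarrow> real) \<Rightarrow> nat \<Rightarrow> nat
    \<Rightarrow> (int \<Rightarrow> nat \<Rightarrow> real) \<Rightarrow> int \<Rightarrow> real" where
  "nonlocal_density h \<gamma> W N R \<rho> j = h * (\<Sum>k<N. \<Sum>\<nu>=1..R. \<gamma> \<nu> * W \<nu> k * \<rho> (j + int k + 1) \<nu>)"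

lemma nonlocal_density_uminus:
  "nonlocal_density h \<gamma> W N R (\<lambda>l \<nu>. - \<rho> l \<nu>) j = - nonlocal_density h \<gamma> W N R \<rho> j"
  by (simp add: nonlocal_density_def sum_negf)

lemma nonlocal_density_bounds:
  assumes "0 \<le> h" "\<forall>\<nu>\<in>{1..R}. 0 \<le> \<gamma> \<nu>" "\<forall>\<nu>\<in>{1..R}. \<forall>k<N. 0 \<le> W \<nu> k"
    and normalized: "h * (\<Sum>k<N. \<Sum>\<nu>=1..R. \<gamma> \<nu> * W \<nu> k) = 1"
    and "\<forall>l. \<forall>\<nu>\<in>{1..R}. lo \<le> \<rho> l \<nu> \<and> \<rho> l \<nu> \<le> hi"
  shows "lo \<le> nonlocal_density h \<gamma> W N R \<rho> j \<and> nonlocal_density h \<gamma> W N R \<rho> j \<le> hi"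
proof -
  define a where "a = (\<lambda>(k, \<nu>). h * (\<gamma> \<nu> * W \<nu> k))"
  have sum_cases: "h * (\<Sum>k<N. \<Sum>\<nu>=1..R. F k \<nu>) = (\<Sum>(k, \<nu>)\<in>{..<N} \<times> {1..R}. h * F k \<nu>)" for F
    by (simp add: sum.cartesian_product[symmetric] sum_distrib_left)
  have "(\<Sum>i\<in>{..<N} \<times> {1..R}. a i) = 1"
    using normalized unfolding sum_cases a_def by (simp add: case_prod_beta)
  then have "lo \<le> (\<Sum>i\<in>{..<N} \<times> {1..R}. a i * (\<lambda>(k, \<nu>). \<rho> (j + int k + 1) \<nu>) i)
           \<and> (\<Sum>i\<in>{..<N} \<times> {1..R}. a i * (\<lambda>(k, \<nu>). \<rho> (j + int k + 1) \<nu>) i) \<le> hi"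
    using assms(1-3,5) by (intro convex_combination_bounds) (auto simp: a_def)
  moreover have "nonlocal_density h \<gamma> W N R \<rho> j
      = (\<Sum>i\<in>{..<N} \<times> {1..R}. a i * (\<lambda>(k, \<nu>). \<rho> (j + int k + 1) \<nu>) i)"
    unfolding nonlocal_density_def sum_cases a_def by (simp add: case_prod_beta mult.assoc)
  ultimately show ?thesis by simp
qed

lemma nonlocal_density_increment_le:
  assumes "0 \<le> h" "0 < N" "(\<Sum>\<nu>=1..R. \<gamma> \<nu>) = 1" "\<forall>\<nu>\<in>{1..R}. 0 \<le> \<gamma> \<nu>"
    and W: "\<forall>\<nu>\<in>{1..R}. \<forall>k<N. 0 \<le> W \<nu> k" "\<forall>\<nu>\<in>{1..R}. \<forall>k. Suc k < N \<longrightarrow> W \<nu> (Suc k) \<le> W \<nu> k"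
      "\<forall>\<nu>\<in>{1..R}. W \<nu> 0 \<le> w0"
    and hi: "\<forall>l. \<forall>\<nu>\<in>{1..R}. \<rho> l \<nu> \<le> hi"
  shows "nonlocal_density h \<gamma> W N R \<rho> j - nonlocal_density h \<gamma> W N R \<rho> (j - 1)
    \<le> h * w0 * (hi - (\<Sum>\<nu>=1..R. \<gamma> \<nu> * \<rho> j \<nu>))"
proof -
  define \<Delta> where "\<Delta> \<nu> = (\<Sum>k<N. W \<nu> k * (\<rho> (j + int (Suc k)) \<nu> - \<rho> (j + int k) \<nu>))" for \<nu>
  have shift: "j + int k + 1 = j + int (Suc k)" "j - 1 + int k + 1 = j + int k" for k by simp_all
  have "nonlocal_density h \<gamma> W N R \<rho> j - nonlocal_density h \<gamma> W N R \<rho> (j - 1)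
      = h * ((\<Sum>k<N. \<Sum>\<nu>=1..R. \<gamma> \<nu> * W \<nu> k * \<rho> (j + int (Suc k)) \<nu>)
           - (\<Sum>k<N. \<Sum>\<nu>=1..R. \<gamma> \<nu> * W \<nu> k * \<rho> (j + int k) \<nu>))"
    unfolding nonlocal_density_def shift by (simp add: right_diff_distrib)
  also have "\<dots> = h * (\<Sum>k<N. \<Sum>\<nu>=1..R. \<gamma> \<nu> * (W \<nu> k * (\<rho> (j + int (Suc k)) \<nu> - \<rho> (j + int k) \<nu>)))"
    by (simp add: sum_subtractf[symmetric] right_diff_distrib mult_ac)
  also have "\<dots> = h * (\<Sum>\<nu>=1..R. \<gamma> \<nu> * \<Delta> \<nu>)"
    by (simp add: \<Delta>_def sum.swap[of _ "{..<N}"] sum_distrib_left)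
  also have "\<dots> \<le> h * (\<Sum>\<nu>=1..R. \<gamma> \<nu> * (w0 * (hi - \<rho> j \<nu>)))"
  proof (rule mult_left_mono[OF sum_mono])
    fix \<nu> assume \<nu>: "\<nu> \<in> {1..R}"
    have "\<Delta> \<nu> \<le> W \<nu> 0 * (hi - \<rho> j \<nu>)"
      using abel_sum_le[of N "W \<nu>" "\<lambda>k. \<rho> (j + int k) \<nu>" hi] assms(2) W(1,2) hi \<nu>
      by (simp add: \<Delta>_def)
    also have "\<dots> \<le> w0 * (hi - \<rho> j \<nu>)" using W(3) hi \<nu> by (intro mult_right_mono) auto
    finally show "\<gamma> \<nu> * \<Delta> \<nu> \<le> \<gamma> \<nu> * (w0 * (hi - \<rho> j \<nu>))"
      using assms(4) \<nu> by (intro mult_left_mono) auto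
  qed (use assms(1) in simp)
  also have "\<dots> = h * w0 * (\<Sum>\<nu>=1..R. \<gamma> \<nu> * (hi - \<rho> j \<nu>))"
    by (simp add: sum_distrib_left mult_ac)
  also have "\<dots> = h * w0 * (hi - (\<Sum>\<nu>=1..R. \<gamma> \<nu> * \<rho> j \<nu>))"
    by (simp only: quadrature_of_gap[OF assms(3)])
  finally show ?thesis .
qed

lemma Lop_eq_nonlocal_density:
  assumes "y R = 1"
  shows "Lop g v w N R y \<gamma> rec x0 h u j
    = - (1 / h) * (v (nonlocal_density h \<gamma> (kernel_weights w y h) N R (nodeval rec x0 h y u) j)
                    * g (nodeval rec x0 h y u j R)
                 - v (nonlocal_density h \<gamma> (kernel_weights w y h) N R (nodeval rec x0 h y u) (j - 1))
                    * g (nodeval rec x0 h y u (j - 1) R))"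
  using assms
  by (simp add: Lop_def Vface_def rhominus_def nonlocal_density_def kernel_weights_def nodeval_def xl_def
      algebra_simps)

lemma quadrature_node_in_kernel_support:
  assumes "0 < h" "real N * h = \<eta>" "\<forall>\<nu>\<in>{1..R}. 0 \<le> y \<nu> \<and> y \<nu> \<le> 1" "\<nu> \<in> {1..R}" "k < N"
  shows "(real k + y \<nu>) * h \<in> {0..\<eta>}"
proof -
  have "real k + 1 \<le> real N" using assms(5) by simp
  then have "real k + y \<nu> \<le> real N" using assms(3,4) by fastforce
  then show ?thesis using assms by (auto intro: mult_right_mono)
qed

lemma kernel_weights_nonneg:
  assumes "0 < h" "real N * h = \<eta>" "\<forall>\<nu>\<in>{1..R}. 0 \<le> y \<nu> \<and> y \<nu> \<le> 1" "\<forall>x\<in>{0..\<eta>}. 0 \<le> w x"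
  shows "\<forall>\<nu>\<in>{1..R}. \<forall>k<N. 0 \<le> kernel_weights w y h \<nu> k"
  using quadrature_node_in_kernel_support[OF assms(1-3)] assms(4) by (simp add: kernel_weights_def)

lemma kernel_weights_decreasing:
  assumes "0 < h" "real N * h = \<eta>" "\<forall>\<nu>\<in>{1..R}. 0 \<le> y \<nu> \<and> y \<nu> \<le> 1" "antimono_on {0..\<eta>} w"
  shows "\<forall>\<nu>\<in>{1..R}. \<forall>k. Suc k < N \<longrightarrow> kernel_weights w y h \<nu> (Suc k) \<le> kernel_weights w y h \<nu> k"
proof (intro ballI allI impI)
  fix \<nu> k assume "\<nu> \<in> {1..R}" "Suc k < N"
  then have "(real (Suc k) + y \<nu>) * h \<in> {0..\<eta>}" "(real k + y \<nu>) * h \<in> {0..\<eta>}"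
    using quadrature_node_in_kernel_support[OF assms(1-3), of \<nu> "Suc k"]
      quadrature_node_in_kernel_support[OF assms(1-3), of \<nu> k] by auto
  moreover have "(real k + y \<nu>) * h \<le> (real (Suc k) + y \<nu>) * h"
    using assms(1) by (intro mult_right_mono) auto
  ultimately show "kernel_weights w y h \<nu> (Suc k) \<le> kernel_weights w y h \<nu> k"
    unfolding kernel_weights_def using monotone_onD[OF assms(4)] by blast
qed

lemma kernel_weights_le_peak:
  assumes "0 < h" "0 < N" "real N * h = \<eta>" "\<forall>\<nu>\<in>{1..R}. 0 \<le> y \<nu> \<and> y \<nu> \<le> 1" "antimono_on {0..\<eta>} w"
  shows "\<forall>\<nu>\<in>{1..R}. kernel_weights w y h \<nu> 0 \<le> w 0"
  using quadrature_node_in_kernel_support[OF assms(1,3,4) _ assms(2)] assms(1-4)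
  unfolding kernel_weights_def by (auto intro!: monotone_onD[OF assms(5)])

lemma Lop_forward_euler_bounds:
  fixes g v w :: "real \<Rightarrow> real" and u :: "int \<Rightarrow> real"
  assumes recR: "propR rec x0 h R y \<gamma> rm rM"
    and u: "\<forall>l. rm \<le> u l \<and> u l \<le> rM"
    and quadrature: "1 \<le> R" "y R = 1" "\<forall>\<nu>\<in>{1..R}. 0 \<le> y \<nu> \<and> y \<nu> \<le> 1"
      "\<forall>\<nu>\<in>{1..R}. \<gamma> \<nu> > 0" "(\<Sum>\<nu>=1..R. \<gamma> \<nu>) = 1"
    and kernel: "0 < h" "0 < N" "real N * h = \<eta>" "\<forall>x\<in>{0..\<eta>}. 0 \<le> w x" "antimono_on {0..\<eta>} w"
      "h * (\<Sum>k<N. \<Sum>\<nu>=1..R. \<gamma> \<nu> * w ((real k + y \<nu>) * h)) = 1"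
    and g: "mono_lipschitz_on {0..rmax} Gd g" "\<forall>x\<in>{0..rmax}. 0 \<le> g x \<and> g x \<le> G" "0 \<le> Gd"
    and v: "mono_lipschitz_on {0..rmax} Vd (\<lambda>x. - v x)" "\<forall>x\<in>{0..rmax}. 0 \<le> v x \<and> v x \<le> Vn" "0 \<le> Vd"
    and range: "0 \<le> rm" "rM \<le> rmax"
    and CFL: "0 \<le> lam" "lam * (\<gamma> R * h * w 0 * Vd * G + Vn * Gd) \<le> \<gamma> R * h"
  shows "rm \<le> u j + lam * Lop g v w N R y \<gamma> rec x0 h u j
       \<and> u j + lam * Lop g v w N R y \<gamma> rec x0 h u j \<le> rM"
proof -
  define \<rho> where "\<rho> = nodeval rec x0 h y u"
  define W where "W = kernel_weights w y h"
  define A where "A = nonlocal_density h \<gamma> W N R \<rho>"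
  have nodes: "\<forall>l. \<forall>\<nu>\<in>{1..R}. rm \<le> \<rho> l \<nu> \<and> \<rho> l \<nu> \<le> rM"
    and u_eq: "u l = (\<Sum>\<nu>=1..R. \<gamma> \<nu> * \<rho> l \<nu>)" for l
    using recR u unfolding propR_def \<rho>_def nodeval_def by metis+
  have \<gamma>_nonneg: "\<forall>\<nu>\<in>{1..R}. 0 \<le> \<gamma> \<nu>" using quadrature(4) by (auto intro: less_imp_le)
  note W_nonneg = kernel_weights_nonneg[OF kernel(1,3) quadrature(3) kernel(4), folded W_def]
  note W_decreasing = kernel_weights_decreasing[OF kernel(1,3) quadrature(3) kernel(5), folded W_def]
  note W_le = kernel_weights_le_peak[OF kernel(1-3) quadrature(3) kernel(5), folded W_def]
  have W_normalized: "h * (\<Sum>k<N. \<Sum>\<nu>=1..R. \<gamma> \<nu> * W \<nu> k) = 1"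
    using kernel(6) by (simp add: W_def kernel_weights_def)
  have A_range: "A l \<in> {rm..rM}" for l
    using nonlocal_density_bounds[OF _ \<gamma>_nonneg W_nonneg W_normalized nodes] kernel(1)
    by (simp add: A_def)
  \<comment> \<open>The lower bounds are the upper bounds for the negated node values.\<close>
  have increments: "A j - A (j - 1) \<le> h * w 0 * (rM - u j)" "A (j - 1) - A j \<le> h * w 0 * (u j - rm)"
    using nonlocal_density_increment_le[OF _ kernel(2) quadrature(5) \<gamma>_nonneg W_nonneg W_decreasing W_le,
        of h \<rho> rM j]
      nonlocal_density_increment_le[OF _ kernel(2) quadrature(5) \<gamma>_nonneg W_nonneg W_decreasing W_le,
        of h "\<lambda>l \<nu>. - \<rho> l \<nu>" "- rm" j]
      nodes kernel(1)
    by (simp_all add: A_def u_eq nonlocal_density_uminus sum_negf)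
  have last_node: "\<gamma> R * (rM - \<rho> j R) \<le> rM - u j" "\<gamma> R * (\<rho> j R - rm) \<le> u j - rm"
    using quadrature_gap_le[OF quadrature(1,5) \<gamma>_nonneg, of "\<rho> j" rM]
      quadrature_gap_le[OF quadrature(1,5) \<gamma>_nonneg, of "\<lambda>\<nu>. - \<rho> j \<nu>" "- rm"]
      nodes
    by (simp_all add: u_eq sum_negf)
  have step: "u j + lam * Lop g v w N R y \<gamma> rec x0 h u j
      = u j - lam / h * (v (A j) * g (\<rho> j R) - v (A (j - 1)) * g (\<rho> (j - 1) R))"
    unfolding Lop_eq_nonlocal_density[where y = y and R = R, OF quadrature(2)]
      \<rho>_def[symmetric] W_def[symmetric] A_def[symmetric]
    by simp
  have "R \<in> {1..R}" using quadrature(1) by simp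
  then show ?thesis
    unfolding step
    using nodes quadrature(4) kernel(1,3,4) range A_range CFL
    by (intro flux_difference_step_bounds[OF g(1,2) v(1,2) g(3) v(3) _ _ kernel(1) CFL
          range _ _ _ _ last_node increments]) auto
qed

lemma ssp_run_bounds:
  assumes ssp: "ssp_run L c \<tau> z"
    and init: "\<forall>j. lo \<le> z 0 j \<and> z 0 j \<le> hi"
    and euler: "\<And>u \<beta> j. \<forall>l. lo \<le> u l \<and> u l \<le> hi \<Longrightarrow> 0 \<le> \<beta> \<Longrightarrow> \<beta> \<le> 1 / c
        \<Longrightarrow> lo \<le> u j + \<tau> * \<beta> * L u j \<and> u j + \<tau> * \<beta> * L u j \<le> hi"
  shows "lo \<le> z m j \<and> z m j \<le> hi"
proof (induction m arbitrary: j rule: less_induct)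
  case (less m)
  show ?case
  proof (cases "m = 0")
    case True
    then show ?thesis using init by simp
  next
    case False
    then have "0 < m" by simp
    from ssp[unfolded ssp_run_def, rule_format, OF this] show ?thesis
    proof (elim exE conjE)
      fix K :: nat and \<alpha> \<beta> :: "nat \<Rightarrow> real" and p :: "nat \<Rightarrow> nat"
      assume coeffs: "\<forall>k<K. 0 \<le> \<alpha> k \<and> 0 \<le> \<beta> k \<and> \<beta> k \<le> 1 / c \<and> p k < m"
        and sum_one: "(\<Sum>k<K. \<alpha> k) = 1"
        and z_m: "z m = (\<lambda>j. \<Sum>k<K. \<alpha> k * (z (p k) j + \<tau> * \<beta> k * L (z (p k)) j))"
      have "lo \<le> z (p k) j + \<tau> * \<beta> k * L (z (p k)) j \<and> z (p k) j + \<tau> * \<beta> k * L (z (p k)) j \<le> hi"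
        if "k < K" for k
        using coeffs that less.IH by (intro euler) auto
      then show ?thesis
        unfolding z_m using coeffs by (intro convex_combination_bounds[OF _ sum_one]) auto
    qed
  qed
qed

theorem theorem3p2:
  fixes rmax \<eta> h x0 c \<tau> rm rM :: real
    and g gd v vd w wd \<rho>0 :: "real \<Rightarrow> real"
    and N R :: nat
    and y \<gamma> :: "nat \<Rightarrow> real"
    and rec :: "(int \<Rightarrow> real) \<Rightarrow> int \<Rightarrow> real poly"
    and z :: "nat \<Rightarrow> int \<Rightarrow> real"
    and s :: "nat \<Rightarrow> nat"
  assumes rmax_pos: "rmax > 0" and eta_pos: "\<eta> > 0"
    and g_deriv: "\<forall>x\<in>{0..rmax}. (g has_real_derivative gd x) (at x within {0..rmax})"
    and gd_cont: "continuous_on {0..rmax} gd"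
    and g_nonneg: "\<forall>x\<in>{0..rmax}. g x \<ge> 0" and gd_nonneg: "\<forall>x\<in>{0..rmax}. gd x \<ge> 0"
    and v_deriv: "\<forall>x\<in>{0..rmax}. (v has_real_derivative vd x) (at x within {0..rmax})"
    and vd_cont: "continuous_on {0..rmax} vd"
    and v_nonneg: "\<forall>x\<in>{0..rmax}. v x \<ge> 0" and vd_nonpos: "\<forall>x\<in>{0..rmax}. vd x \<le> 0"
    and w_deriv: "\<forall>x\<in>{0..\<eta>}. (w has_real_derivative wd x) (at x within {0..\<eta>})"
    and wd_cont: "continuous_on {0..\<eta>} wd"
    and w_nonneg: "\<forall>x\<in>{0..\<eta>}. w x \<ge> 0" and wd_nonpos: "\<forall>x\<in>{0..\<eta>}. wd x \<le> 0"
    and w_int: "integral {0..\<eta>} w = 1"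
    and h_pos: "h > 0" and Nh: "real N * h = \<eta>"
    and R_pos: "R \<ge> 1"
    and y_range: "\<forall>\<nu>\<in>{1..R}. 0 \<le> y \<nu> \<and> y \<nu> \<le> 1" and y_R: "y R = 1"
    and \<gamma>_pos: "\<forall>\<nu>\<in>{1..R}. \<gamma> \<nu> > 0" and \<gamma>_sum: "(\<Sum>\<nu>=1..R. \<gamma> \<nu>) = 1"
    and w_discrete: "h * (\<Sum>k<N. \<Sum>\<nu>=1..R. \<gamma> \<nu> * w ((real k + y \<nu>) * h)) = 1"
    and \<rho>0_range: "\<forall>x. 0 \<le> \<rho>0 x \<and> \<rho>0 x \<le> rmax"
    and rm_def: "rm = (INF x. \<rho>0 x)" and rM_def: "rM = (SUP x. \<rho>0 x)"
    and recR: "propR rec x0 h R y \<gamma> rm rM"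
    and c_pos: "c > 0" and \<tau>_pos: "\<tau> > 0"
    and CFL: "\<tau> * (\<gamma> R * h * w 0 * supnorm rmax vd * supnorm rmax g
                  + supnorm rmax v * supnorm rmax gd) \<le> c * (\<gamma> R * h)"
    and ssp: "ssp_run (Lop g v w N R y \<gamma> rec x0 h) c \<tau> z"
    and init: "z 0 = (\<lambda>j. \<Sum>\<nu>=1..R. \<gamma> \<nu> * \<rho>0 (xl x0 h j + h * y \<nu>))"
    and steps: "s 0 = 0" "strict_mono s"
  shows "\<forall>n j. rm \<le> z (s n) j \<and> z (s n) j \<le> rM"
proof -
  note \<rho>0_bounds = Inf_Sup_range_bounds[OF \<rho>0_range, folded rm_def rM_def]
  have rmax_nonneg: "0 \<le> rmax" using rmax_pos by simp
  have "0 < N" using Nh eta_pos h_pos by (cases N) auto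
  have euler: "rm \<le> u j + \<tau> * \<beta> * Lop g v w N R y \<gamma> rec x0 h u j
      \<and> u j + \<tau> * \<beta> * Lop g v w N R y \<gamma> rec x0 h u j \<le> rM"
    if "\<forall>l. rm \<le> u l \<and> u l \<le> rM" "0 \<le> \<beta>" "\<beta> \<le> 1 / c" for u \<beta> j
  proof (rule Lop_forward_euler_bounds[OF recR that(1) R_pos y_R y_range \<gamma>_pos \<gamma>_sum h_pos \<open>0 < N\<close> Nh
        w_nonneg antimono_on_of_deriv_nonpos[OF w_deriv wd_nonpos] w_discrete
        mono_lipschitz_on_supnorm[OF g_deriv gd_cont gd_nonneg] bounds_supnorm_of_deriv[OF g_deriv g_nonneg]
        supnorm_nonneg[OF rmax_nonneg gd_cont] neg_mono_lipschitz_on_supnorm[OF v_deriv vd_cont vd_nonpos]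
        bounds_supnorm_of_deriv[OF v_deriv v_nonneg]
        supnorm_nonneg[OF rmax_nonneg vd_cont] \<rho>0_bounds(3,4)])
    show "0 \<le> \<tau> * \<beta>" using \<tau>_pos that(2) by simp
    show "\<tau> * \<beta> * (\<gamma> R * h * w 0 * supnorm rmax vd * supnorm rmax g + supnorm rmax v * supnorm rmax gd)
        \<le> \<gamma> R * h"
    proof (rule cfl_rescaled[OF CFL c_pos _ _ that(2,3)])
      show "0 \<le> \<tau>" using \<tau>_pos by simp
      show "0 \<le> \<gamma> R * h" using \<gamma>_pos R_pos h_pos by (simp add: less_imp_le)
    qed
  qed
  have "rm \<le> z m j \<and> z m j \<le> rM" for m j
  proof (rule ssp_run_bounds[OF ssp _ euler])
    show "\<forall>j. rm \<le> z 0 j \<and> z 0 j \<le> rM"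
      unfolding init using \<gamma>_pos \<rho>0_bounds(1,2)
      by (intro allI convex_combination_bounds[OF _ \<gamma>_sum]) (auto intro: less_imp_le)
  qed
  then show ?thesis by blast
qed

end
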